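(* Let $G$ be an $(n,n,p_s,p_d)$-two-island network with groups $V_1,V_2$, and let the dual opinions evolve according to the dynamics in the context with common bias $b>0$, common resilience $\phi\in(0,1)$, and the symmetric initial condition $x_i(0)=x_0\in(\tfrac12,1)$, $y_i(0)=y_0\in[\tfrac12,x_0]$ for $i\in V_1$, $x_j(0)=1-x_0$, $y_j(0)=1-y_0$ for $j\in V_2$. Let $i\in V_1$. If there exists $k_x$ such that $x_i(t)$ is monotonic for all $t>k_x$, then there exists $k>k_x$ such that $y_i(t)$ is monotonic for all $t>k$, and both $x_i(t)$ and $y_i(t)$ converge as $t\to\infty$.
   Context: Let $n\ge 1$ and $p_s,p_d\in(0,1)$ with $p_s>p_d$ and $np_s,np_d$ positive integers. An $(n,n,p_s,p_d)$-two-island network is an undirected graph (no self-loops) with vertex set $V=V_1\cup V_2$, $V_1\cap V_2=\emptyset$, $|V_1|=|V_2|=n$, such that each node of $V_1$ has exactly $np_s$ neighbours in $V_1$ and $np_d$ neighbours in $V_2$, and each node of $V_2$ has exactly $np_s$ neighbours in $V_2$ and $np_d$ neighbours in $V_1$. Let $w_{ij}\in\{0,1\}$ be the adjacency matrix, $N_i$ the set of neighbours of $i$, and $d_i=\sum_{j\in N_i}w_{ij}$. Dual opinions dynamics: each $i\in V$ has $x_i(t),y_i(t)\in[0,1]$, $t=0,1,2,\dots$, updated by $$x_i(t+1)=\frac{x_i(t)^{b}s_i(t)}{x_i(t)^{b}s_i(t)+(1-x_i(t))^{b}(d_i-s_i(t))},\qquad y_i(t+1)=\phi\, x_i(t+1)+(1-\phi)\hat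 y_{i,avg}(t),$$ with $s_i(t)=\sum_{j\in N_i}w_{ij}y_j(t)$ and $\hat y_{i,avg}(t)=\sum_{j\in N_i}\frac{w_{ij}}{d_i}y_j(t)$. *)

theory Defs
  imports "HOL-Analysis.Analysis"
begin

text \<open>Undirected simple graph given by a symmetric irreflexive adjacency relation E
  (w_ij = 1 iff E i j) on the finite vertex set V1 \<union> V2.\<close>

definition nbrs :: "('a \<Rightarrow> 'a \<Rightarrow> bool) \<Rightarrow> 'a set \<Rightarrow> 'a \<Rightarrow> 'a set" where
  "nbrs E V i = {j \<in> V. E i j}"

definition two_island_network ::
  "nat \<Rightarrow> real \<Rightarrow> real \<Rightarrow> 'a set \<Rightarrow> 'a set \<Rightarrow> ('a \<Rightarrow> 'a \<Rightarrow> bool) \<Rightarrow> bool" where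
  "two_island_network n ps pd V1 V2 E \<longleftrightarrow>
     n \<ge> 1 \<and> 0 < pd \<and> pd < ps \<and> ps < 1 \<and>
     (\<exists>k::nat. k > 0 \<and> real k = real n * ps) \<and>
     (\<exists>k::nat. k > 0 \<and> real k = real n * pd) \<and>
     finite V1 \<and> finite V2 \<and> V1 \<inter> V2 = {} \<and> card V1 = n \<and> card V2 = n \<and>
     (\<forall>i j. E i j \<longrightarrow> i \<in> V1 \<union> V2 \<and> j \<in> V1 \<union> V2) \<and>
     (\<forall>i j. E i j \<longleftrightarrow> E j i) \<and> (\<forall>i. \<not> E i i) \<and>
     (\<forall>i\<in>V1. real (card {j \<in> V1. E i j}) = real n * ps \<and>
               real (card {j \<in> V2. E i j}) = real n * pd) \<and>
     (\<forall>i\<in>V2. real (card {j \<in> V2. E i j}) = real n * ps \<and>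
               real (card {j \<in> V1. E i j}) = real n * pd)"

definition dual_opinion_dynamics ::
  "'a set \<Rightarrow> ('a \<Rightarrow> 'a \<Rightarrow> bool) \<Rightarrow> real \<Rightarrow> real \<Rightarrow>
   (nat \<Rightarrow> 'a \<Rightarrow> real) \<Rightarrow> (nat \<Rightarrow> 'a \<Rightarrow> real) \<Rightarrow> bool" where
  "dual_opinion_dynamics V E b phi x y \<longleftrightarrow>
     (\<forall>t. \<forall>i\<in>V.
        (let d = real (card (nbrs E V i));
             s = (\<Sum>j\<in>nbrs E V i. y t j)
         in x (Suc t) i = (x t i powr b * s) /
                            (x t i powr b * s + (1 - x t i) powr b * (d - s))
          \<and> y (Suc t) i = phi * x (Suc t) i + (1 - phi) * (s / d)))"

definition monotone_after :: "nat \<Rightarrow> (nat \<Rightarrow> real) \<Rightarrow> bool" where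
  "monotone_after k f \<longleftrightarrow>
     (\<forall>s t. k < s \<and> s \<le> t \<longrightarrow> f s \<le> f t) \<or> (\<forall>s t. k < s \<and> s \<le> t \<longrightarrow> f t \<le> f s)"

end

theory Submission
  imports Defs
begin

text \<open>The symmetric initial condition is preserved: at every time all nodes of \<open>V1\<close> hold a
  common pair \<open>(X t, Y t)\<close> and all nodes of \<open>V2\<close> hold \<open>(1 - X t, 1 - Y t)\<close>. Hence the
  neighbourhood average of a node of \<open>V1\<close> is the increasing affine function
  \<open>m Y = (ps Y + pd (1 - Y)) / (ps + pd)\<close> of \<open>Y t\<close>, and
  \<open>Y (t+1) = phi X (t+1) + (1 - phi) m (Y t)\<close>. If \<open>X\<close> is eventually monotone, then as soon as
  one increment of \<open>Y\<close> has the direction of \<open>X\<close>, both terms of every later increment of \<open>Y\<close>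
  have it too; otherwise \<open>Y\<close> moves against \<open>X\<close> forever. Either way \<open>Y\<close> is eventually
  monotone, and bounded monotone sequences converge.\<close>

lemma monotone_after_incI:
  fixes f :: "nat \<Rightarrow> real"
  assumes "\<And>t. k \<le> t \<Longrightarrow> f t \<le> f (Suc t)"
  shows "monotone_after k f"
proof -
  have "f s \<le> f t" if "k < s" "s \<le> t" for s t
    using that(2)
  proof (induction t rule: dec_induct)
    case base
    show ?case by simp
  next
    case (step m)
    then show ?case using assms[of m] that(1) by linarith
  qed
  then show ?thesis unfolding monotone_after_def by blast
qed

lemma monotone_after_uminus_iff:
  "monotone_after k (\<lambda>t. - f t) \<longleftrightarrow> monotone_after k f"
  unfolding monotone_after_def by auto

lemma monotone_after_decI:
  fixes f :: "nat \<Rightarrow> real"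
  assumes "\<And>t. k \<le> t \<Longrightarrow> f (Suc t) \<le> f t"
  shows "monotone_after k f"
  using monotone_after_incI[of k "\<lambda>t. - f t"] assms
  by (simp add: monotone_after_uminus_iff)

lemma Bseq_monotone_after_convergent:
  fixes f :: "nat \<Rightarrow> real"
  assumes "monotone_after k f" "Bseq f"
  shows "convergent f"
proof -
  have "monoseq (\<lambda>m. f (m + Suc k))"
    using assms(1) unfolding monotone_after_def monoseq_def by auto
  moreover have "Bseq (\<lambda>m. f (m + Suc k))"
    using assms(2) by (rule Bseq_ignore_initial_segment)
  ultimately have "convergent (\<lambda>m. f (m + Suc k))"
    using Bseq_monoseq_convergent by blast
  then show ?thesis by (simp only: convergent_ignore_initial_segment)
qed

lemma relaxation_monotone_after_of_incseq:
  fixes X Y :: "nat \<Rightarrow> real" and g :: "real \<Rightarrow> real"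
  assumes rec: "\<And>t. Y (Suc t) = phi * X (Suc t) + (1 - phi) * g (Y t)"
    and g: "mono g" and phi: "0 \<le> phi" "phi \<le> 1"
    and X: "\<And>s t. kx < s \<Longrightarrow> s \<le> t \<Longrightarrow> X s \<le> X t"
  shows "\<exists>k>kx. monotone_after k Y"
proof (cases "\<exists>t0\<ge>kx. Y t0 \<le> Y (Suc t0)")
  case True
  then obtain t0 where t0: "kx \<le> t0" "Y t0 \<le> Y (Suc t0)" by blast
  have "Y t \<le> Y (Suc t)" if "t0 \<le> t" for t
    using that
  proof (induction t rule: dec_induct)
    case base
    show ?case using t0(2) .
  next
    case (step m)
    have "X (Suc m) \<le> X (Suc (Suc m))" using X step.hyps t0(1) by simp
    moreover have "g (Y m) \<le> g (Y (Suc m))" using g step.IH by (rule monoD)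
    ultimately show ?case
      unfolding rec[of m] rec[of "Suc m"] using phi by (intro add_mono mult_left_mono) auto
  qed
  then have "monotone_after (Suc t0) Y" by (intro monotone_after_incI) simp
  then show ?thesis using t0(1) by (intro exI[of _ "Suc t0"]) auto
next
  case False
  then have "Y (Suc t) \<le> Y t" if "kx \<le> t" for t
    using that by force
  then have "monotone_after (Suc kx) Y" by (intro monotone_after_decI) simp
  then show ?thesis by blast
qed

lemma relaxation_monotone_after:
  fixes X Y :: "nat \<Rightarrow> real" and g :: "real \<Rightarrow> real"
  assumes rec: "\<And>t. Y (Suc t) = phi * X (Suc t) + (1 - phi) * g (Y t)"
    and g: "mono g" and phi: "0 \<le> phi" "phi \<le> 1"
    and X: "monotone_after kx X"
  shows "\<exists>k>kx. monotone_after k Y"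
proof -
  consider "\<And>s t. kx < s \<Longrightarrow> s \<le> t \<Longrightarrow> X s \<le> X t"
    | "\<And>s t. kx < s \<Longrightarrow> s \<le> t \<Longrightarrow> - X s \<le> - X t"
    using X unfolding monotone_after_def neg_le_iff_le by blast
  then show ?thesis
  proof cases
    case 1
    then show ?thesis
      by (rule relaxation_monotone_after_of_incseq[where X = X and Y = Y, OF rec g phi])
  next
    case 2
    have "mono (\<lambda>u. - g (- u))" by (rule monoI) (simp add: monoD[OF g])
    moreover have "- Y (Suc t) = phi * - X (Suc t) + (1 - phi) * - g (- (- Y t))" for t
      using rec[of t] by simp
    ultimately have "\<exists>k>kx. monotone_after k (\<lambda>t. - Y t)"
      using relaxation_monotone_after_of_incseq[of "\<lambda>t. - Y t" phi "\<lambda>t. - X t" "\<lambda>u. - g (- u)" kx]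
        phi 2 by simp
    then show ?thesis by (simp add: monotone_after_uminus_iff)
  qed
qed

definition biased_update :: "real \<Rightarrow> real \<Rightarrow> real \<Rightarrow> real \<Rightarrow> real" where
  "biased_update b x s d = x powr b * s / (x powr b * s + (1 - x) powr b * (d - s))"

lemma biased_update_bounds:
  assumes "0 < x" "x < 1" "0 < s" "s < d"
  shows "0 < biased_update b x s d" "biased_update b x s d < 1"
proof -
  have "0 < x powr b * s" "0 < (1 - x) powr b * (d - s)" using assms by simp_all
  then show "0 < biased_update b x s d" "biased_update b x s d < 1"
    unfolding biased_update_def by simp_all
qed

lemma biased_update_complement:
  assumes "0 < x" "x < 1" "0 < s" "s < d"
  shows "biased_update b (1 - x) (d - s) d = 1 - biased_update b x s d"
proof -
  have "0 < x powr b * s" "0 < (1 - x) powr b * (d - s)" using assms by simp_all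
  then show ?thesis unfolding biased_update_def by (simp add: field_simps)
qed

lemma dual_opinion_dynamicsD:
  assumes "dual_opinion_dynamics V E b phi x y" "j \<in> V"
  shows "x (Suc t) j = biased_update b (x t j) (\<Sum>k\<in>nbrs E V j. y t k) (card (nbrs E V j))"
    and "y (Suc t) j =
      phi * x (Suc t) j + (1 - phi) * ((\<Sum>k\<in>nbrs E V j. y t k) / card (nbrs E V j))"
  using assms unfolding dual_opinion_dynamics_def biased_update_def Let_def by auto

lemma sum_nbrs_Un_disjoint:
  assumes "finite V1" "finite V2" "V1 \<inter> V2 = {}"
  shows "(\<Sum>k\<in>nbrs E (V1 \<union> V2) j. f k) = (\<Sum>k\<in>{k\<in>V1. E j k}. f k) + (\<Sum>k\<in>{k\<in>V2. E j k}. f k)"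
proof -
  have "nbrs E (V1 \<union> V2) j = {k\<in>V1. E j k} \<union> {k\<in>V2. E j k}" by (auto simp: nbrs_def)
  then show ?thesis using assms by (simp add: sum.union_disjoint disjoint_iff)
qed

definition island_symmetric :: "'a set \<Rightarrow> 'a set \<Rightarrow> ('a \<Rightarrow> real) \<Rightarrow> real \<Rightarrow> bool" where
  "island_symmetric V1 V2 f c \<longleftrightarrow> (\<forall>j\<in>V1. f j = c) \<and> (\<forall>j\<in>V2. f j = 1 - c)"

lemma two_island_nbrs_sum:
  assumes G: "two_island_network n ps pd V1 V2 E" and f: "island_symmetric V1 V2 f c"
  shows "j \<in> V1 \<Longrightarrow> (\<Sum>k\<in>nbrs E (V1 \<union> V2) j. f k) = n * ps * c + n * pd * (1 - c)"
    and "j \<in> V2 \<Longrightarrow> (\<Sum>k\<in>nbrs E (V1 \<union> V2) j. f k) = n * ps * (1 - c) + n * pd * c"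
proof -
  have "(\<Sum>k\<in>nbrs E (V1 \<union> V2) j. f k) = card {k\<in>V1. E j k} * c + card {k\<in>V2. E j k} * (1 - c)"
    using G f by (simp add: sum_nbrs_Un_disjoint two_island_network_def island_symmetric_def)
  then show "j \<in> V1 \<Longrightarrow> (\<Sum>k\<in>nbrs E (V1 \<union> V2) j. f k) = n * ps * c + n * pd * (1 - c)"
    and "j \<in> V2 \<Longrightarrow> (\<Sum>k\<in>nbrs E (V1 \<union> V2) j. f k) = n * ps * (1 - c) + n * pd * c"
    using G unfolding two_island_network_def by auto
qed

lemma two_island_degree:
  assumes G: "two_island_network n ps pd V1 V2 E" and j: "j \<in> V1 \<union> V2"
  shows "real (card (nbrs E (V1 \<union> V2) j)) = n * ps + n * pd"
proof -
  have "finite V1" "finite V2" "V1 \<inter> V2 = {}" using G unfolding two_island_network_def by auto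
  then have "(\<Sum>k\<in>nbrs E (V1 \<union> V2) j. 1 :: real) =
      (\<Sum>k\<in>{k\<in>V1. E j k}. 1) + (\<Sum>k\<in>{k\<in>V2. E j k}. 1)"
    by (rule sum_nbrs_Un_disjoint)
  then show ?thesis using G j unfolding two_island_network_def by auto
qed

definition two_island_average :: "real \<Rightarrow> real \<Rightarrow> real \<Rightarrow> real" where
  "two_island_average ps pd c = (ps * c + pd * (1 - c)) / (ps + pd)"

lemma mono_two_island_average:
  assumes "pd \<le> ps" "0 < ps + pd"
  shows "mono (two_island_average ps pd)"
proof (rule monoI)
  fix u v :: real
  assume "u \<le> v"
  then have "ps * u + pd * (1 - u) \<le> ps * v + pd * (1 - v)"
    using assms(1) mult_right_mono[of pd ps "v - u"] by (simp add: algebra_simps)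
  then show "two_island_average ps pd u \<le> two_island_average ps pd v"
    unfolding two_island_average_def using assms(2) by (simp add: divide_right_mono)
qed

lemma two_island_symmetric_step:
  assumes G: "two_island_network n ps pd V1 V2 E"
    and dyn: "dual_opinion_dynamics (V1 \<union> V2) E b phi x y" and phi: "0 \<le> phi" "phi \<le> 1"
    and xt: "island_symmetric V1 V2 (x t) X" and X: "0 < X" "X < 1"
    and yt: "island_symmetric V1 V2 (y t) Y" and Y: "0 < Y" "Y < 1"
  defines "X' \<equiv> biased_update b X (n * ps * Y + n * pd * (1 - Y)) (n * ps + n * pd)"
  defines "Y' \<equiv> phi * X' + (1 - phi) * two_island_average ps pd Y"
  shows "island_symmetric V1 V2 (x (Suc t)) X'" "0 < X'" "X' < 1"
    and "island_symmetric V1 V2 (y (Suc t)) Y'" "0 < Y'" "Y' < 1"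
proof -
  define s where "s = n * ps * Y + n * pd * (1 - Y)"
  define d where "d = n * ps + n * pd"
  have n: "n \<ge> 1" and p: "0 < pd" "pd < ps"
    using G unfolding two_island_network_def by auto
  have "0 < n * ps" "0 < n * pd" using n p by simp_all
  then have "0 < n * ps * Y" "n * ps * Y < n * ps" "0 < n * pd * (1 - Y)" "n * pd * (1 - Y) < n * pd"
    using Y mult_strict_left_mono[of Y 1 "n * ps"] mult_strict_left_mono[of "1 - Y" 1 "n * pd"]
    by simp_all
  then have s: "0 < s" "s < d" unfolding s_def d_def by simp_all
  have "s / d = (n * (ps * Y + pd * (1 - Y))) / (n * (ps + pd))"
    unfolding s_def d_def by (simp add: algebra_simps)
  then have avg: "s / d = two_island_average ps pd Y"
    using n unfolding two_island_average_def by simp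
  have sum1: "(\<Sum>k\<in>nbrs E (V1 \<union> V2) j. y t k) = s" if "j \<in> V1" for j
    using two_island_nbrs_sum(1)[OF G yt that] by (simp add: s_def)
  have sum2: "(\<Sum>k\<in>nbrs E (V1 \<union> V2) j. y t k) = d - s" if "j \<in> V2" for j
    using two_island_nbrs_sum(2)[OF G yt that] by (simp add: s_def d_def algebra_simps)
  have deg: "real (card (nbrs E (V1 \<union> V2) j)) = d" if "j \<in> V1 \<union> V2" for j
    using two_island_degree[OF G that] by (simp add: d_def)
  note step = dual_opinion_dynamicsD[OF dyn]
  show x1: "island_symmetric V1 V2 (x (Suc t)) X'"
    using xt sum1 sum2 deg biased_update_complement[OF X s]
    by (simp add: island_symmetric_def step X'_def s_def d_def)
  show X': "0 < X'" "X' < 1" using biased_update_bounds[OF X s] by (simp_all add: X'_def s_def d_def)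
  have avg_bounds: "0 < s / d" "s / d < 1" using s by simp_all
  show "Y' < 1"
    unfolding Y'_def avg[symmetric] using X' avg_bounds phi by (intro convex_bound_lt) auto
  have "phi * - X' + (1 - phi) * - (s / d) < 0"
    using X' avg_bounds phi by (intro convex_bound_lt) auto
  then show "0 < Y'" unfolding Y'_def avg[symmetric] by simp
  have "y (Suc t) j = Y'" if "j \<in> V1" for j
    using that x1 sum1 deg avg by (simp add: step island_symmetric_def Y'_def)
  moreover have "y (Suc t) j = 1 - Y'" if "j \<in> V2" for j
  proof -
    have "y (Suc t) j = phi * (1 - X') + (1 - phi) * ((d - s) / d)"
      using that x1 sum2 deg by (simp add: step island_symmetric_def)
    also have "\<dots> = 1 - Y'"
      using s unfolding Y'_def avg[symmetric] by (simp add: diff_divide_distrib algebra_simps)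
    finally show ?thesis .
  qed
  ultimately show "island_symmetric V1 V2 (y (Suc t)) Y'"
    unfolding island_symmetric_def by blast
qed

lemma two_island_symmetric_trajectory:
  assumes G: "two_island_network n ps pd V1 V2 E"
    and dyn: "dual_opinion_dynamics (V1 \<union> V2) E b phi x y" and phi: "0 \<le> phi" "phi \<le> 1"
    and x0: "island_symmetric V1 V2 (x 0) X0" "0 < X0" "X0 < 1"
    and y0: "island_symmetric V1 V2 (y 0) Y0" "0 < Y0" "Y0 < 1"
    and i: "i \<in> V1"
  shows "island_symmetric V1 V2 (x t) (x t i) \<and> 0 < x t i \<and> x t i < 1 \<and>
      island_symmetric V1 V2 (y t) (y t i) \<and> 0 < y t i \<and> y t i < 1"
    and "y (Suc t) i = phi * x (Suc t) i + (1 - phi) * two_island_average ps pd (y t i)"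
proof -
  have at_i: "f i = c" if "island_symmetric V1 V2 f c" for f c
    using that i unfolding island_symmetric_def by blast
  show inv: "island_symmetric V1 V2 (x t) (x t i) \<and> 0 < x t i \<and> x t i < 1 \<and>
      island_symmetric V1 V2 (y t) (y t i) \<and> 0 < y t i \<and> y t i < 1" for t
  proof (induction t)
    case 0
    then show ?case using x0 y0 at_i[OF x0(1)] at_i[OF y0(1)] by simp
  next
    case (Suc t)
    then show ?case
      using two_island_symmetric_step[OF G dyn phi, of t "x t i" "y t i"] at_i by metis
  qed
  show "y (Suc t) i = phi * x (Suc t) i + (1 - phi) * two_island_average ps pd (y t i)"
    using inv[of t] two_island_symmetric_step(1,4)[OF G dyn phi, of t "x t i" "y t i"] at_i
    by metis
qed

theorem lemmaB4:
  fixes n :: nat and ps pd b phi x0 y0 :: real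
    and V1 V2 :: "'a set" and E :: "'a \<Rightarrow> 'a \<Rightarrow> bool"
    and x y :: "nat \<Rightarrow> 'a \<Rightarrow> real" and i :: 'a and kx :: nat
  assumes G: "two_island_network n ps pd V1 V2 E"
    and b: "b > 0" and phi: "0 < phi" "phi < 1"
    and x0: "1/2 < x0" "x0 < 1" and y0: "1/2 \<le> y0" "y0 \<le> x0"
    and init1: "\<forall>j\<in>V1. x 0 j = x0 \<and> y 0 j = y0"
    and init2: "\<forall>j\<in>V2. x 0 j = 1 - x0 \<and> y 0 j = 1 - y0"
    and dyn: "dual_opinion_dynamics (V1 \<union> V2) E b phi x y"
    and i: "i \<in> V1"
    and mx: "monotone_after kx (\<lambda>t. x t i)"
  shows "\<exists>k>kx. monotone_after k (\<lambda>t. y t i) \<and>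
           convergent (\<lambda>t. x t i) \<and> convergent (\<lambda>t. y t i)"
proof -
  have p: "0 < pd" "pd < ps" using G by (simp_all add: two_island_network_def)
  have sym0: "island_symmetric V1 V2 (x 0) x0" "island_symmetric V1 V2 (y 0) y0"
    using init1 init2 by (simp_all add: island_symmetric_def)
  note trajectory = two_island_symmetric_trajectory[OF G dyn _ _ sym0(1) _ _ sym0(2) _ _ i]
  have bounds: "0 < x t i" "x t i < 1" "0 < y t i" "y t i < 1" for t
    using trajectory(1)[of t] phi x0 y0 by auto
  have rec: "y (Suc t) i = phi * x (Suc t) i + (1 - phi) * two_island_average ps pd (y t i)" for t
    using trajectory(2) phi x0 y0 by auto
  have "mono (two_island_average ps pd)" using p by (intro mono_two_island_average) auto
  then obtain k where k: "k > kx" "monotone_after k (\<lambda>t. y t i)"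
    using relaxation_monotone_after[OF rec _ _ _ mx] phi by fastforce
  have "Bseq (\<lambda>t. x t i)" "Bseq (\<lambda>t. y t i)"
    using bounds by (auto intro!: BseqI'[of _ 1] simp: abs_le_iff less_imp_le)
  then show ?thesis
    using k Bseq_monotone_after_convergent mx by blast
qed

end
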